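(* Let $n\ge2$ and let $U:=\{(q,p)\in T^*\mathbb{R}^n: q_1+\sum_{i=2}^nq_i^2=\frac14\}$. Then $U$ is a smooth hypersurface in $T^*\mathbb{R}^n$, but its $b$-image $U_b:=\overline{\pi(U\times\{-1,1\})}$ (closure in $W$) is not a smooth hypersurface of $W$.
   Context: Identify $\mathbb{R}^{2n}=T^*\mathbb{R}^n$ with coordinates $(q,p)$. Realize $T^*S^{n-1}=\{(\psi,\zeta)\in\mathbb{R}^n\times\mathbb{R}^n:|\psi|=1,\ \psi\cdot\zeta=0\}$. Let $\widetilde W=\mathbb{R}^2\times T^*S^{n-1}$ with coordinates $(z,P_r,\psi,\zeta)$, $\widetilde Y=\{z=0\}$. Define $f:\widetilde W\setminus\widetilde Y\to\mathbb{R}^{2n}\times\{-1,1\}$ by $f(z,P_r,\psi,\zeta)=\big((2z^{-2}\psi,\ P_r\psi+\tfrac{z^2}{2}\zeta),\operatorname{sgn}z\big)$; it is a diffeomorphism onto $T^*(\mathbb{R}^n\setminus\{0\})\times\{-1,1\}$. Let $W:=\big((\mathbb{R}^{2n}\times\{-1,1\})\sqcup\widetilde W\big)/\sim$ where $w\sim f(w)$ for $w\in\widetilde W\setminus\widetilde Y$, with the quotient topology; $\pi$ denotes the projection. $W$ is a smooth manifold on which $\pi$ restricted to $\mathbb{R}^{2n}\times\{-1,1\}$ and to $\widetilde W$ are diffeomorphisms onto open subsets. *)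

theory Defs
  imports "HOL-Analysis.Analysis"
begin

text \<open>C-infinity on an open set: there is a family of all iterated Frechet derivatives;
  D vs x is the iterated derivative at x applied to the directions in the list vs.\<close>
definition smooth_on :: "'a::euclidean_space set \<Rightarrow> ('a \<Rightarrow> 'b::real_normed_vector) \<Rightarrow> bool" where
  "smooth_on S f \<longleftrightarrow> open S \<and>
     (\<exists>D :: 'a list \<Rightarrow> 'a \<Rightarrow> 'b.
        (\<forall>x\<in>S. D [] x = f x) \<and>
        (\<forall>vs. \<forall>x\<in>S. (D vs has_derivative (\<lambda>h. D (h # vs) x)) (at x)))"

definition diffeo_between :: "'a::euclidean_space set \<Rightarrow> 'a set \<Rightarrow> ('a \<Rightarrow> 'a) \<Rightarrow> ('a \<Rightarrow> 'a) \<Rightarrow> bool" where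
  "diffeo_between V \<Omega> \<phi> \<psi> \<longleftrightarrow> smooth_on V \<phi> \<and> smooth_on \<Omega> \<psi> \<and> \<phi> ` V = \<Omega> \<and>
     (\<forall>x\<in>V. \<psi> (\<phi> x) = x) \<and> (\<forall>y\<in>\<Omega>. \<phi> (\<psi> y) = y)"

definition submanifold :: "nat \<Rightarrow> 'a::euclidean_space set \<Rightarrow> bool" where
  "submanifold k S \<longleftrightarrow>
     (\<forall>x\<in>S. \<exists>V \<Omega> \<phi> \<psi> L. open V \<and> x \<in> V \<and> open \<Omega> \<and> diffeo_between V \<Omega> \<phi> \<psi> \<and>
        subspace L \<and> dim L = k \<and> \<phi> ` (S \<inter> V) = \<Omega> \<inter> L)"

text \<open>T^*R^n = (real^'n) \<times> (real^'n) with coordinates (q,p); the sign component of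
  R^{2n} \<times> {-1,1} is a real number in {-1,1}.  Points of Wtilde are (z, P_r, psi, zeta).\<close>

definition Wt :: "(real \<times> real \<times> (real^'n) \<times> (real^'n)) set" where
  "Wt = {(z, Pr, \<psi>, \<zeta>). norm \<psi> = 1 \<and> \<psi> \<bullet> \<zeta> = 0}"

definition fW :: "real \<times> real \<times> (real^'n) \<times> (real^'n) \<Rightarrow> ((real^'n) \<times> (real^'n)) \<times> real" where
  "fW w = (case w of (z, Pr, \<psi>, \<zeta>) \<Rightarrow>
      (((2 / z\<^sup>2) *\<^sub>R \<psi>, Pr *\<^sub>R \<psi> + (z\<^sup>2 / 2) *\<^sub>R \<zeta>), sgn z))"

type_synonym ('n) Wpre = "(((real^'n) \<times> (real^'n)) \<times> real) + (real \<times> real \<times> (real^'n) \<times> (real^'n))"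

definition Wcar :: "('n::finite) Wpre set" where
  "Wcar = Inl ` (UNIV \<times> {-1, 1}) \<union> Inr ` Wt"

definition Wstep :: "('n::finite) Wpre \<Rightarrow> ('n::finite) Wpre \<Rightarrow> bool" where
  "Wstep a b \<longleftrightarrow> (\<exists>w. w \<in> Wt \<and> fst w \<noteq> 0 \<and> a = Inr w \<and> b = Inl (fW w))"

definition Wsim :: "('n::finite) Wpre \<Rightarrow> ('n::finite) Wpre \<Rightarrow> bool" where
  "Wsim = (\<lambda>a b. Wstep a b \<or> Wstep b a)\<^sup>*\<^sup>*"

definition Wpi :: "('n::finite) Wpre \<Rightarrow> ('n::finite) Wpre set" where
  "Wpi a = {b \<in> Wcar. Wsim a b}"

definition W :: "('n::finite) Wpre set set" where
  "W = Wpi ` Wcar"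

definition W_open :: "('n::finite) Wpre set set \<Rightarrow> bool" where
  "W_open Op \<longleftrightarrow> Op \<subseteq> W \<and>
     openin (top_of_set (UNIV \<times> {-1, 1})) {x \<in> UNIV \<times> {-1, 1}. Wpi (Inl x) \<in> Op} \<and>
     openin (top_of_set Wt) {w \<in> Wt. Wpi (Inr w) \<in> Op}"

definition W_closure :: "('n::finite) Wpre set set \<Rightarrow> ('n::finite) Wpre set set" where
  "W_closure A = {c \<in> W. \<forall>Op. W_open Op \<and> c \<in> Op \<longrightarrow> Op \<inter> A \<noteq> {}}"

text \<open>Smooth hypersurface of W (dim W = 2n), checked in the two charts given by the
  restrictions of pi to R^{2n} \<times> {-1,1} (each sheet) and to Wtilde.  A hypersurface of
  the embedded submanifold Wtilde of R^{2+2n} is a subset of Wtilde which is an embedded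
  submanifold of R^{2+2n} of dimension 2n-1.\<close>
definition W_smooth_hypersurface :: "('n::finite) Wpre set set \<Rightarrow> bool" where
  "W_smooth_hypersurface S \<longleftrightarrow> S \<subseteq> W \<and>
     (\<forall>s\<in>{-1, 1::real}. submanifold (2 * CARD('n) - 1) {x. Wpi (Inl (x, s)) \<in> S}) \<and>
     submanifold (2 * CARD('n) - 1) {w \<in> Wt. Wpi (Inr w) \<in> S}"

text \<open>The hypersurface U, where i1 plays the role of the first coordinate index.\<close>
definition Uset :: "'n \<Rightarrow> ((real^'n) \<times> (real^'n)) set" where
  "Uset i1 = {(q, p). q $ i1 + (\<Sum>i\<in>UNIV - {i1}. (q $ i)\<^sup>2) = 1/4}"

end

theory Submission
  imports Defs
begin

text \<open>
  U is the graph q_1 = 1/4 - (q_2^2 + ... + q_n^2); the shear x \<mapsto> x + (Q x - 1/4) e_1, which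
  preserves the quadratic part Q, maps it onto a hyperplane.

  In the chart \<open>Wt\<close> the b-image of U is not smooth at x_0 = (z, P_r, \<psi>, \<zeta>) = (0, 0, -e_1, 0).
  For t \<noteq> 0 the points (t, 0, \<psi>_\<plusminus>(t), 0) with
  \<psi>_\<plusminus>(t) = -(1 - t^2/4) e_1 \<plusminus> t sqrt(1/2 - t^2/16) e_j lie over U, so the closure contains two
  curves through x_0 with the different velocities (1, 0, \<plusminus>e_j/sqrt 2, 0). The closure also
  contains the segments through x_0 in the directions P_r and \<zeta>_j (j \<noteq> 1), as limits of the
  same sheets. These velocities span a 2n-dimensional space, whereas any curve in a smooth
  hypersurface through x_0 has its velocity in a (2n-1)-dimensional tangent space.
\<close>

lemma smooth_on_shear_along_quadratic:
  assumes b: "bounded_bilinear (b :: 'a::euclidean_space \<Rightarrow> 'a \<Rightarrow> real)"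
  shows "smooth_on UNIV (\<lambda>x. x + (b x x + c) *\<^sub>R e)"
proof -
  interpret bounded_bilinear b by (fact b)
  define D where "D = (\<lambda>vs x. case vs of
       [] \<Rightarrow> x + (b x x + c) *\<^sub>R e
     | [h] \<Rightarrow> h + (b x h + b h x) *\<^sub>R e
     | [h1, h2] \<Rightarrow> (b h2 h1 + b h1 h2) *\<^sub>R e
     | _ \<Rightarrow> 0)"
  have "(D vs has_derivative (\<lambda>h. D (h # vs) x)) (at x)" for vs x
  proof (cases vs rule: remdups_adj.cases)
    case 1
    then show ?thesis
      unfolding D_def by (auto intro!: derivative_eq_intros FDERIV)
  next
    case (2 h)
    then show ?thesis
      unfolding D_def by (auto intro!: derivative_eq_intros FDERIV simp: algebra_simps zero_left zero_right)
  next
    case (3 h1 h2 vs')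
    then show ?thesis
      unfolding D_def by (cases vs') auto
  qed
  then show ?thesis
    unfolding smooth_on_def by (intro conjI exI[of _ D]) (auto simp: D_def)
qed

lemma submanifold_level_set_quadratic_graph:
  fixes e :: "'a::euclidean_space"
  assumes b: "bounded_bilinear b" and e: "e \<bullet> e = 1"
    and shift_invariant: "\<And>x t. b (x + t *\<^sub>R e) (x + t *\<^sub>R e) = b x x"
  shows "submanifold (DIM('a) - 1) {x. e \<bullet> x + b x x = c}"
proof -
  define \<phi> where "\<phi> x = x + (b x x - c) *\<^sub>R e" for x
  define \<psi> where "\<psi> x = x + (b x x - c) *\<^sub>R (- e)" for x
  define L where "L = {y. e \<bullet> y = 0}"
  have \<psi>_\<phi>: "\<psi> (\<phi> x) = x" for x
    unfolding \<phi>_def \<psi>_def by (simp add: shift_invariant)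
  have \<phi>_\<psi>: "\<phi> (\<psi> y) = y" for y
  proof -
    have "\<psi> y = y + (- (b y y - c)) *\<^sub>R e"
      unfolding \<psi>_def by (simp add: scaleR_diff_left)
    then show ?thesis
      unfolding \<phi>_def by (simp add: shift_invariant flip: scaleR_add_left)
  qed
  have "smooth_on UNIV \<phi>" "smooth_on UNIV \<psi>"
    unfolding \<phi>_def \<psi>_def diff_conv_add_uminus by (intro smooth_on_shear_along_quadratic b)+
  moreover have "\<phi> ` UNIV = UNIV"
    by (metis \<phi>_\<psi> surj_def)
  ultimately have "diffeo_between UNIV UNIV \<phi> \<psi>"
    unfolding diffeo_between_def using \<psi>_\<phi> \<phi>_\<psi> by blast
  moreover have "\<phi> ` ({x. e \<bullet> x + b x x = c} \<inter> UNIV) = UNIV \<inter> L"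
  proof -
    have "\<phi> x \<in> L \<longleftrightarrow> e \<bullet> x + b x x = c" for x
      unfolding \<phi>_def L_def using e by (auto simp: algebra_simps)
    then show ?thesis
      by (auto simp: image_iff) (metis \<phi>_\<psi>)
  qed
  moreover have "e \<noteq> 0"
    using e by auto
  then have "dim L = DIM('a) - 1"
    unfolding L_def by (rule dim_hyperplane)
  ultimately show ?thesis
    unfolding submanifold_def L_def
    by (blast intro: subspace_hyperplane)
qed

section \<open>Velocities of curves in a submanifold\<close>

definition tangent_velocities :: "'a::real_normed_vector set \<Rightarrow> 'a \<Rightarrow> 'a set" where
  "tangent_velocities S x =
     {v. \<exists>p. (p has_vector_derivative v) (at 0) \<and> p 0 = x \<and> (\<forall>\<^sub>F t in at 0. p t \<in> S)}"

lemma smooth_on_imp_differentiable: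
  assumes "smooth_on V f" "x \<in> V"
  shows "f differentiable (at x)"
proof -
  obtain D where D: "\<forall>x\<in>V. D [] x = f x" "\<forall>vs. \<forall>x\<in>V. (D vs has_derivative (\<lambda>h. D (h # vs) x)) (at x)"
    and "open V"
    using assms(1) unfolding smooth_on_def by blast
  have "(f has_derivative (\<lambda>h. D [h] x)) (at x)"
    using D assms(2) by (auto intro: has_derivative_transform_within_open[OF _ \<open>open V\<close> assms(2)])
  then show ?thesis
    unfolding differentiable_def by blast
qed

lemma has_vector_derivative_difference_quotient:
  assumes "(f has_vector_derivative w) (at 0)"
  shows "((\<lambda>t. (f t - f 0) /\<^sub>R t) \<longlongrightarrow> w) (at 0)"
proof -
  have lim: "((\<lambda>t. norm (f t - f 0 - t *\<^sub>R w) / \<bar>t\<bar>) \<longlongrightarrow> 0) (at 0)"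
    using assms unfolding has_vector_derivative_def has_derivative_iff_norm by simp
  have quotient: "norm ((f t - f 0) /\<^sub>R t - w) = norm (f t - f 0 - t *\<^sub>R w) / \<bar>t\<bar>" if "t \<noteq> 0" for t
  proof -
    have "(f t - f 0) /\<^sub>R t - w = (f t - f 0 - t *\<^sub>R w) /\<^sub>R t"
      using that by (simp add: scaleR_diff_right)
    then show ?thesis
      by (simp add: divide_inverse_commute)
  qed
  have "((\<lambda>t. norm ((f t - f 0) /\<^sub>R t - w)) \<longlongrightarrow> 0) (at 0)"
    using lim by (rule Lim_transform_eventually) (auto simp: eventually_at_filter quotient)
  then show ?thesis
    unfolding tendsto_norm_zero_iff by (rule LIM_zero_cancel)
qed

lemma has_vector_derivative_in_subspace:
  fixes f :: "real \<Rightarrow> 'a::euclidean_space"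
  assumes L: "subspace L" and "(f has_vector_derivative w) (at 0)"
    and "f 0 \<in> L" and "\<forall>\<^sub>F t in at 0. f t \<in> L"
  shows "w \<in> L"
proof (rule Lim_in_closed_set[OF closed_subspace[OF L] _ _
      has_vector_derivative_difference_quotient[OF assms(2)]])
  show "\<forall>\<^sub>F t in at 0. (f t - f 0) /\<^sub>R t \<in> L"
    using assms(4) by eventually_elim (intro subspace_scale[OF L] subspace_diff[OF L] assms(3))
qed simp

lemma dim_tangent_velocities_le:
  assumes "submanifold k S" and "x \<in> S"
  shows "dim (tangent_velocities S x) \<le> k"
proof -
  obtain V \<Omega> \<phi> \<psi> L where V: "open V" "x \<in> V" and dif: "diffeo_between V \<Omega> \<phi> \<psi>"
    and L: "subspace L" "dim L = k" and img: "\<phi> ` (S \<inter> V) = \<Omega> \<inter> L"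
    using assms unfolding submanifold_def by meson
  have "smooth_on V \<phi>" "smooth_on \<Omega> \<psi>" "\<phi> x \<in> \<Omega>" and \<psi>_\<phi>: "\<And>y. y \<in> V \<Longrightarrow> \<psi> (\<phi> y) = y"
    using dif V unfolding diffeo_between_def by auto
  then obtain F G where F: "(\<phi> has_derivative F) (at x)" and G: "(\<psi> has_derivative G) (at (\<phi> x))"
    using smooth_on_imp_differentiable V(2) unfolding differentiable_def by meson
  have "(\<psi> \<circ> \<phi> has_derivative (\<lambda>h. h)) (at x)"
    using V \<psi>_\<phi> by (auto intro: has_derivative_transform_within_open[OF has_derivative_ident])
  then have G_F: "G (F v) = v" for v
    using has_derivative_unique[OF diff_chain_at[OF F G]] by (metis comp_apply)
  have "F v \<in> L" if v: "v \<in> tangent_velocities S x" for v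
  proof -
    obtain p where p: "(p has_vector_derivative v) (at 0)" "p 0 = x" "\<forall>\<^sub>F t in at 0. p t \<in> S"
      using v unfolding tangent_velocities_def by blast
    have "(p \<longlongrightarrow> x) (at 0)"
      using has_vector_derivative_continuous[OF p(1)] p(2) by (simp add: isCont_def)
    then have "\<forall>\<^sub>F t in at 0. p t \<in> V"
      using V by (rule topological_tendstoD)
    with p(3) have "\<forall>\<^sub>F t in at 0. (\<phi> \<circ> p) t \<in> L"
      by eventually_elim (use img in auto)
    moreover have "((\<phi> \<circ> p) has_vector_derivative F v) (at 0)"
      using vector_derivative_diff_chain_within[of p v 0 UNIV \<phi> F] p(1,2) F
      by (auto intro: has_derivative_subset)
    moreover have "(\<phi> \<circ> p) 0 \<in> L"
      using img V p(2) assms(2) by auto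
    ultimately show ?thesis
      using has_vector_derivative_in_subspace[OF L(1)] by blast
  qed
  then have "tangent_velocities S x \<subseteq> G ` L"
    using G_F by (metis image_eqI subsetI)
  then have "dim (tangent_velocities S x) \<le> dim (G ` L)"
    by (rule dim_subset)
  also have "\<dots> \<le> k"
    using dim_image_le[OF has_derivative_linear[OF G], of L] L(2) by simp
  finally show ?thesis .
qed

lemma Uset_eq_level_set:
  "Uset i1 = {x. (axis i1 1, 0) \<bullet> x + (\<Sum>i\<in>UNIV - {i1}. fst x $ i * fst x $ i) = 1/4}"
  unfolding Uset_def by (auto simp: inner_prod_def inner_axis' power2_eq_square)

lemma bounded_bilinear_partial_inner:
  "bounded_bilinear
     (\<lambda>(x :: (real^'n::finite) \<times> ('b::euclidean_space)) (y :: (real^'n) \<times> 'b).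
        \<Sum>i\<in>J. fst x $ i * fst y $ i)"
  by (rule bilinear_conv_bounded_bilinear[THEN iffD1])
    (auto simp: bilinear_def sum.distrib sum_distrib_left algebra_simps intro!: linearI)

lemma submanifold_Uset: "submanifold (2 * CARD('n) - 1) (Uset (i1 :: 'n::finite))"
proof -
  have "submanifold (DIM((real^'n) \<times> (real^'n)) - 1) (Uset i1)"
    unfolding Uset_eq_level_set
  proof (rule submanifold_level_set_quadratic_graph[OF bounded_bilinear_partial_inner])
    show "(axis i1 1, 0) \<bullet> (axis i1 1 :: real^'n, 0 :: real^'n) = 1"
      by (simp add: inner_prod_def inner_axis_axis)
  qed (auto simp: axis_def intro!: sum.cong)
  then show ?thesis
    by (simp add: mult_2)
qed

lemma Wpi_eq_if_Wsim:
  fixes a b :: "'n::finite Wpre"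
  assumes "Wsim a b"
  shows "Wpi a = Wpi b"
proof -
  have Wsim_eq: "Wsim = (symclp Wstep)\<^sup>*\<^sup>*"
    unfolding Wsim_def symclp_def ..
  have "Wsim b a"
    using assms unfolding Wsim_eq by (rule rtranclp_symclp_sym)
  have trans: "Wsim x z" if "Wsim x y" "Wsim y z" for x y z :: "'n Wpre"
    using that unfolding Wsim_eq by (rule rtranclp_trans)
  have "Wsim a c \<longleftrightarrow> Wsim b c" for c
    using trans[OF \<open>Wsim b a\<close>, of c] trans[OF assms, of c] by blast
  then show ?thesis
    unfolding Wpi_def by simp
qed

lemma Wpi_Inr_eq_Wpi_Inl:
  assumes "w \<in> Wt" "fst w \<noteq> 0"
  shows "Wpi (Inr w) = Wpi (Inl (fW w))"
proof (rule Wpi_eq_if_Wsim)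
  show "Wsim (Inr w) (Inl (fW w))"
    unfolding Wsim_def Wstep_def using assms by (intro r_into_rtranclp) blast
qed

lemma Wpi_Inr_in_image_Inl:
  assumes "w \<in> Wt" "fst w \<noteq> 0" "fst (fW w) \<in> X"
  shows "Wpi (Inr w) \<in> Wpi ` Inl ` (X \<times> {-1, 1})"
proof -
  have "snd (fW w) \<in> {-1, 1}"
    using assms(2) by (cases w) (auto simp: fW_def sgn_real_def)
  then have "fW w \<in> X \<times> {-1, 1}"
    using assms(3) by (cases "fW w") auto
  then show ?thesis
    unfolding Wpi_Inr_eq_Wpi_Inl[OF assms(1,2)] by (intro imageI)
qed

lemma W_closure_superset: "A \<subseteq> W \<Longrightarrow> A \<subseteq> W_closure A"
  unfolding W_closure_def by auto

lemma Wpi_Inr_in_W_closure_if_tendsto: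
  fixes c :: "real \<Rightarrow> real \<times> real \<times> (real^'n::finite) \<times> (real^'n)"
  assumes "x \<in> Wt" and "(c \<longlongrightarrow> x) (at 0)"
    and "\<forall>\<^sub>F t in at 0. c t \<in> Wt \<and> Wpi (Inr (c t)) \<in> A"
  shows "Wpi (Inr x) \<in> W_closure A"
proof -
  have "Op \<inter> A \<noteq> {}" if "W_open Op" "Wpi (Inr x) \<in> Op" for Op
  proof -
    have "openin (top_of_set Wt) {w \<in> Wt. Wpi (Inr w) \<in> Op}"
      using that(1) unfolding W_open_def by blast
    then obtain T where "open T" and T: "{w \<in> Wt. Wpi (Inr w) \<in> Op} = Wt \<inter> T"
      unfolding openin_open by blast
    then have "\<forall>\<^sub>F t in at 0. c t \<in> T"
      using assms(1,2) that(2) by (blast intro: topological_tendstoD)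
    with assms(3) have "\<forall>\<^sub>F t in at 0. Wpi (Inr (c t)) \<in> Op \<inter> A"
    proof eventually_elim
      case (elim t)
      then have "c t \<in> Wt \<inter> T"
        by blast
      then show ?case
        using elim unfolding T[symmetric] by blast
    qed
    then show ?thesis
      using eventually_happens'[OF trivial_limit_at] by blast
  qed
  moreover have "Wpi (Inr x) \<in> W"
    unfolding W_def Wcar_def using assms(1) by auto
  ultimately show ?thesis
    unfolding W_closure_def by blast
qed

section \<open>The b-image of U\<close>

text \<open>With \<open>q = (2/t\<^sup>2) \<psi>\<close> one gets \<open>q\<^sub>1 = 1/2 - 2/t\<^sup>2\<close> and \<open>q\<^sub>j\<^sup>2 = 2/t\<^sup>2 - 1/4\<close>, so \<open>q \<in> U\<close>;
  the constraint \<open>t\<^sup>2 \<le> 8\<close> keeps the square root real.\<close>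
definition psi_branch :: "'n::finite \<Rightarrow> 'n \<Rightarrow> real \<Rightarrow> real \<Rightarrow> real^'n" where
  "psi_branch i1 j \<sigma> t = (- (1 - t\<^sup>2 / 4)) *\<^sub>R axis i1 1 + (\<sigma> * t * sqrt (1/2 - t\<^sup>2 / 16)) *\<^sub>R axis j 1"

lemma psi_branch_nth:
  "psi_branch i1 j \<sigma> t $ i =
     (if i = i1 then - (1 - t\<^sup>2 / 4) else 0) + (if i = j then \<sigma> * t * sqrt (1/2 - t\<^sup>2 / 16) else 0)"
  unfolding psi_branch_def by (simp add: axis_def)

lemma inner_psi_branch_self:
  assumes "j \<noteq> i1" "\<sigma>\<^sup>2 = 1" "t\<^sup>2 \<le> 8"
  shows "psi_branch i1 j \<sigma> t \<bullet> psi_branch i1 j \<sigma> t = 1"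
proof -
  have "psi_branch i1 j \<sigma> t \<bullet> psi_branch i1 j \<sigma> t
      = (1 - t\<^sup>2 / 4)\<^sup>2 + \<sigma>\<^sup>2 * t\<^sup>2 * (sqrt (1/2 - t\<^sup>2 / 16))\<^sup>2"
    unfolding psi_branch_def using assms(1)
    by (simp add: inner_add_left inner_add_right inner_axis_axis power2_eq_square algebra_simps)
  also have "\<dots> = 1"
    using assms(2,3) by (simp add: power2_eq_square field_simps)
  finally show ?thesis .
qed

lemma fW_psi_branch_in_Uset:
  assumes "j \<noteq> i1" "\<sigma>\<^sup>2 = 1" "t\<^sup>2 \<le> 8" "t \<noteq> 0"
  shows "fst (fW (t, Pr, psi_branch i1 j \<sigma> t, \<zeta>)) \<in> Uset i1"
proof -
  define q where "q = (2 / t\<^sup>2) *\<^sub>R psi_branch i1 j \<sigma> t"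
  have "(\<Sum>i\<in>UNIV - {i1}. (q $ i)\<^sup>2) = (\<Sum>i\<in>UNIV - {i1}. if i = j then (q $ j)\<^sup>2 else 0)"
    by (intro sum.cong) (auto simp: q_def psi_branch_nth)
  also have "\<dots> = (q $ j)\<^sup>2"
    using assms(1) by simp
  also have "\<dots> = (2 / t\<^sup>2)\<^sup>2 * t\<^sup>2 * (1/2 - t\<^sup>2 / 16)"
  proof -
    have "q $ j = (2 / t\<^sup>2) * (\<sigma> * t * sqrt (1/2 - t\<^sup>2 / 16))"
      using assms(1) by (simp add: q_def psi_branch_nth)
    then have "(q $ j)\<^sup>2 = (2 / t\<^sup>2)\<^sup>2 * \<sigma>\<^sup>2 * t\<^sup>2 * (sqrt (1/2 - t\<^sup>2 / 16))\<^sup>2"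
      by (simp only: power_mult_distrib)
    then show ?thesis
      using assms(2,3) by simp
  qed
  finally have "q $ i1 + (\<Sum>i\<in>UNIV - {i1}. (q $ i)\<^sup>2)
      = (2 / t\<^sup>2) * (- (1 - t\<^sup>2 / 4)) + (2 / t\<^sup>2)\<^sup>2 * t\<^sup>2 * (1/2 - t\<^sup>2 / 16)"
    using assms(1) by (simp add: q_def psi_branch_nth)
  also have "\<dots> = 1/4"
    using assms(4) by (simp add: power2_eq_square field_simps)
  finally show ?thesis
    unfolding fW_def Uset_def q_def by simp
qed

lemma eventually_in_branch_domain: "\<forall>\<^sub>F t in at (0::real). t \<noteq> 0 \<and> t\<^sup>2 \<le> 8"
proof -
  have "((\<lambda>t::real. t\<^sup>2) \<longlongrightarrow> 0\<^sup>2) (at 0)"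
    by (intro tendsto_intros)
  then have "\<forall>\<^sub>F t in at (0::real). t\<^sup>2 < 8"
    by (rule order_tendstoD(2)) simp
  moreover have "\<forall>\<^sub>F t in at (0::real). t \<noteq> 0"
    by (simp add: eventually_at_filter)
  ultimately show ?thesis
    by eventually_elim simp
qed

definition Ub :: "'n::finite \<Rightarrow> 'n Wpre set set" where
  "Ub i1 = W_closure (Wpi ` Inl ` (Uset i1 \<times> {-1, 1}))"

lemma branch_in_Wt:
  assumes "j \<noteq> i1" "\<sigma>\<^sup>2 = 1" "t\<^sup>2 \<le> 8" "psi_branch i1 j \<sigma> t \<bullet> \<zeta> = 0"
  shows "(t, Pr, psi_branch i1 j \<sigma> t, \<zeta>) \<in> Wt"
  using inner_psi_branch_self[OF assms(1-3)] assms(4) unfolding Wt_def by (simp add: norm_eq_sqrt_inner)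

lemma Wpi_branch_in_sheets:
  assumes "j \<noteq> i1" "\<sigma>\<^sup>2 = 1" "t\<^sup>2 \<le> 8" "t \<noteq> 0" "psi_branch i1 j \<sigma> t \<bullet> \<zeta> = 0"
  shows "Wpi (Inr (t, Pr, psi_branch i1 j \<sigma> t, \<zeta>)) \<in> Wpi ` Inl ` (Uset i1 \<times> {-1, 1})"
  using branch_in_Wt[OF assms(1-3,5)] fW_psi_branch_in_Uset[OF assms(1-4)] assms(4)
  by (intro Wpi_Inr_in_image_Inl) simp_all

lemma sheets_subset_Ub: "Wpi ` Inl ` (Uset i1 \<times> {-1, 1}) \<subseteq> Ub i1"
  unfolding Ub_def by (rule W_closure_superset) (auto simp: W_def Wcar_def)

text \<open>The two sheets over U accumulate on the whole of \<open>{z = 0, \<psi> = -e\<^sub>1, \<zeta>\<^sub>1 = 0}\<close>: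
  project \<open>\<zeta>\<close> onto the tangent space of the sphere along the branch.\<close>
lemma Wpi_base_point_in_Ub:
  assumes j: "j \<noteq> i1" and "\<zeta> $ i1 = 0"
  shows "Wpi (Inr (0, Pr, - axis i1 1, \<zeta>)) \<in> Ub i1"
proof -
  define \<psi> where "\<psi> t = psi_branch i1 j 1 t" for t
  define c where "c t = (t, Pr, \<psi> t, \<zeta> - (\<zeta> \<bullet> \<psi> t) *\<^sub>R \<psi> t)" for t
  have \<psi>_unit: "\<psi> t \<bullet> \<psi> t = 1" if "t\<^sup>2 \<le> 8" for t
    unfolding \<psi>_def using inner_psi_branch_self[OF j, of 1 t] that by simp
  have c0: "(0, Pr, - axis i1 1, \<zeta>) = c 0"
    using assms(2) by (simp add: c_def \<psi>_def psi_branch_def inner_axis)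
  have "c 0 \<in> Wt"
    using assms(2) unfolding c0[symmetric] Wt_def by (simp add: inner_axis')
  moreover have "(c \<longlongrightarrow> c 0) (at 0)"
    unfolding c_def \<psi>_def psi_branch_def by (intro tendsto_intros) simp_all
  moreover from eventually_in_branch_domain
  have "\<forall>\<^sub>F t in at 0. c t \<in> Wt \<and> Wpi (Inr (c t)) \<in> Wpi ` Inl ` (Uset i1 \<times> {-1, 1})"
  proof eventually_elim
    case (elim t)
    then have le: "t\<^sup>2 \<le> 8"
      by simp
    then have "\<psi> t \<bullet> (\<zeta> - (\<zeta> \<bullet> \<psi> t) *\<^sub>R \<psi> t) = 0"
      using \<psi>_unit by (simp add: inner_diff_right inner_commute)
    then show ?case
      using branch_in_Wt[OF j _ le] Wpi_branch_in_sheets[OF j _ le] elim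
      unfolding c_def \<psi>_def by simp
  qed
  ultimately show ?thesis
    unfolding Ub_def c0 by (rule Wpi_Inr_in_W_closure_if_tendsto)
qed

definition Ub_tilde :: "'n::finite \<Rightarrow> (real \<times> real \<times> (real^'n) \<times> (real^'n)) set" where
  "Ub_tilde i1 = {w \<in> Wt. Wpi (Inr w) \<in> Ub i1}"

lemma base_point_in_Ub_tilde:
  assumes "j \<noteq> i1" and "\<zeta> $ i1 = 0"
  shows "(0, Pr, - axis i1 1, \<zeta>) \<in> Ub_tilde i1"
  using Wpi_base_point_in_Ub[OF assms] assms(2)
  unfolding Ub_tilde_def Wt_def by (simp add: inner_axis')

lemma tangent_velocities_Ub_tilde:
  fixes i1 j :: "'n::finite"
  defines "x0 \<equiv> (0, 0, - axis i1 1, 0) :: real \<times> real \<times> (real^'n) \<times> (real^'n)"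
  assumes j: "j \<noteq> i1"
  shows "(0, 1, 0, 0) \<in> tangent_velocities (Ub_tilde i1) x0"
    and "(0, 0, 0, axis j 1) \<in> tangent_velocities (Ub_tilde i1) x0"
    and "\<sigma>\<^sup>2 = 1 \<Longrightarrow> (1, 0, (\<sigma> * sqrt (1/2)) *\<^sub>R axis j 1, 0) \<in> tangent_velocities (Ub_tilde i1) x0"
proof -
  show "(0, 1, 0, 0) \<in> tangent_velocities (Ub_tilde i1) x0"
    unfolding tangent_velocities_def
  proof (intro CollectI exI conjI)
    show "((\<lambda>t. (0, t, - axis i1 1, 0)) has_vector_derivative (0, 1, 0, 0)) (at 0)"
      by (auto intro!: derivative_eq_intros simp: has_vector_derivative_def zero_prod_def)
  qed (use base_point_in_Ub_tilde[OF j] in \<open>simp_all add: x0_def\<close>)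
  show "(0, 0, 0, axis j 1) \<in> tangent_velocities (Ub_tilde i1) x0"
    unfolding tangent_velocities_def
  proof (intro CollectI exI conjI)
    show "((\<lambda>t. (0, 0, - axis i1 1, t *\<^sub>R axis j 1)) has_vector_derivative (0, 0, 0, axis j 1)) (at 0)"
      by (auto intro!: derivative_eq_intros simp: has_vector_derivative_def)
  qed (use base_point_in_Ub_tilde[OF j] j in \<open>simp_all add: x0_def axis_def\<close>)
  assume \<sigma>: "\<sigma>\<^sup>2 = 1"
  show "(1, 0, (\<sigma> * sqrt (1/2)) *\<^sub>R axis j 1, 0) \<in> tangent_velocities (Ub_tilde i1) x0"
    unfolding tangent_velocities_def
  proof (intro CollectI exI conjI)
    show "((\<lambda>t. (t, 0, psi_branch i1 j \<sigma> t, 0)) has_vector_derivative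
        (1, 0, (\<sigma> * sqrt (1/2)) *\<^sub>R axis j 1, 0)) (at 0)"
      unfolding psi_branch_def
      by (auto intro!: derivative_eq_intros simp: has_vector_derivative_def fun_eq_iff)
    show "\<forall>\<^sub>F t in at 0. (t, 0, psi_branch i1 j \<sigma> t, 0) \<in> Ub_tilde i1"
      using eventually_in_branch_domain
    proof eventually_elim
      case (elim t)
      then show ?case
        using branch_in_Wt[OF j \<sigma>] Wpi_branch_in_sheets[OF j \<sigma>] sheets_subset_Ub
        unfolding Ub_tilde_def by fastforce
    qed
  qed (simp add: x0_def psi_branch_def)
qed

lemma mem_Basis_Wt_ambient_iff:
  "b \<in> (Basis :: (real \<times> real \<times> (real^'n::finite) \<times> (real^'n)) set) \<longleftrightarrow>
     b = (1, 0, 0, 0) \<or> b = (0, 1, 0, 0) \<or> (\<exists>j. b = (0, 0, axis j 1, 0)) \<or> (\<exists>j. b = (0, 0, 0, axis j 1))"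
  by (auto simp: Basis_prod_def Basis_vec_def image_iff zero_prod_def)

lemma Basis_minus_subset_span_tangent_velocities_Ub_tilde:
  fixes i1 j0 :: "'n::finite"
  assumes j0: "j0 \<noteq> i1"
  shows "Basis - {(0, 0, axis i1 1, 0), (0, 0, 0, axis i1 1)}
    \<subseteq> span (tangent_velocities (Ub_tilde i1) (0, 0, - axis i1 1, 0))"
proof -
  define T where "T = span (tangent_velocities (Ub_tilde i1) (0, 0, - axis i1 1, (0 :: real^'n)))"
  define u where "u j \<sigma> = ((1::real), (0::real), (\<sigma> * sqrt (1/2)) *\<^sub>R axis j (1::real), (0::real^'n))" for j :: 'n and \<sigma>
  have u: "u j 1 \<in> T" "u j (-1) \<in> T" if "j \<noteq> i1" for j
    using tangent_velocities_Ub_tilde(3)[OF that, of 1] tangent_velocities_Ub_tilde(3)[OF that, of "-1"]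
    unfolding T_def u_def by (simp_all add: span_base)
  text \<open>The two branches through the base point have velocities \<open>(1, 0, \<plusminus>e\<^sub>j/\<surd>2, 0)\<close>;
    their half-sum and half-difference span the remaining directions.\<close>
  have "(1, 0, 0, 0) = (1/2) *\<^sub>R (u j0 1 + u j0 (-1))"
    by (simp add: u_def)
  then have z: "(1, 0, 0, 0) \<in> T"
    using u[OF j0] by (metis span_add span_scale T_def)
  have \<psi>: "(0, 0, axis j 1, 0) \<in> T" if "j \<noteq> i1" for j
  proof -
    have "(0, 0, axis j 1, 0) = (1 / (2 * sqrt (1/2))) *\<^sub>R (u j 1 - u j (-1))"
      by (simp add: u_def scaleR_diff_right[symmetric] scaleR_scaleR)
    then show ?thesis
      using u[OF that] by (metis span_diff span_scale T_def)
  qed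
  have Pr: "(0, 1, 0, 0) \<in> T"
    using tangent_velocities_Ub_tilde(1)[OF j0] unfolding T_def by (simp add: span_base)
  have \<zeta>: "(0, 0, 0, axis j 1) \<in> T" if "j \<noteq> i1" for j
    using tangent_velocities_Ub_tilde(2)[OF that] unfolding T_def by (simp add: span_base)
  show ?thesis
    unfolding T_def[symmetric]
  proof (intro subsetI, elim DiffE)
    fix b :: "real \<times> real \<times> (real^'n) \<times> (real^'n)"
    assume "b \<in> Basis" "b \<notin> {(0, 0, axis i1 1, 0), (0, 0, 0, axis i1 1)}"
    then consider "b = (1, 0, 0, 0)" | "b = (0, 1, 0, 0)"
      | j where "j \<noteq> i1" "b = (0, 0, axis j 1, 0)" | j where "j \<noteq> i1" "b = (0, 0, 0, axis j 1)"
      unfolding mem_Basis_Wt_ambient_iff by (auto simp: axis_eq_axis) blast+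
    then show "b \<in> T"
      by cases (use z \<psi> Pr \<zeta> in auto)
  qed
qed

lemma not_W_smooth_hypersurface_Ub:
  fixes i1 :: "'n::finite"
  assumes "CARD('n) \<ge> 2"
  shows "\<not> W_smooth_hypersurface (Ub i1)"
proof
  assume "W_smooth_hypersurface (Ub i1)"
  then have hyp: "submanifold (2 * CARD('n) - 1) (Ub_tilde i1)"
    unfolding W_smooth_hypersurface_def Ub_tilde_def by blast
  obtain j0 :: 'n where j0: "j0 \<noteq> i1"
  proof -
    have "UNIV \<noteq> {i1}"
    proof
      assume "UNIV = {i1}"
      then have "CARD('n) = card {i1}"
        by (simp only:)
      with assms show False
        by simp
    qed
    then show ?thesis
      using that by blast
  qed
  define x0 :: "real \<times> real \<times> (real^'n) \<times> (real^'n)" where "x0 = (0, 0, - axis i1 1, 0)"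
  define E :: "(real \<times> real \<times> (real^'n) \<times> (real^'n)) set"
    where "E = {(0, 0, axis i1 1, 0), (0, 0, 0, axis i1 1)}"
  have "E \<subseteq> Basis" "card E = 2"
    unfolding E_def by (auto simp: mem_Basis_Wt_ambient_iff axis_eq_0_iff)
  then have "2 * CARD('n) = card (Basis - E)"
    by (simp add: card_Diff_subset finite_subset)
  also have "\<dots> \<le> dim (tangent_velocities (Ub_tilde i1) x0)"
    using independent_card_le_dim[OF Basis_minus_subset_span_tangent_velocities_Ub_tilde[OF j0]]
    unfolding E_def x0_def by (simp add: independent_mono[OF independent_Basis])
  also have "\<dots> \<le> 2 * CARD('n) - 1"
    using dim_tangent_velocities_le[OF hyp] base_point_in_Ub_tilde[OF j0, of 0 0]
    unfolding x0_def by simp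
  finally show False
    using assms by simp
qed

theorem lemmaB1:
  fixes i1 :: "'n::finite"
  assumes "CARD('n) \<ge> 2"
  shows "submanifold (2 * CARD('n) - 1) (Uset i1)
    \<and> \<not> W_smooth_hypersurface (W_closure (Wpi ` Inl ` (Uset i1 \<times> {-1, 1})) :: 'n Wpre set set)"
  using submanifold_Uset not_W_smooth_hypersurface_Ub[OF assms] unfolding Ub_def by blast

end
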